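(* Let $\mathcal{L}$ be a complex linear subspace of dimension $\delta$ of the space of complex symmetric $\delta\times\delta$ matrices such that $\mathcal{L}\not\subset sl(\delta,\mathbb{C})$ (i.e. some element of $\mathcal{L}$ has nonzero trace). Then there exists $S\in O(\delta,\mathbb{C})$ such that the restriction of $\pi$ to $S\mathcal{L}S^{-1}=\{SLS^{-1}:L\in\mathcal{L}\}$ is a bijection onto $\mathbb{C}^\delta$.
   Context: $\pi(A)=(a_{11},\dots,a_{\delta\delta})$ denotes the vector of diagonal entries of a $\delta\times\delta$ matrix $A$. $sl(\delta,\mathbb{C})$ is the space of trace-zero $\delta\times\delta$ complex matrices. $O(\delta,\mathbb{C})=\{S: SS^t=I\}$. *)

theory Defs
  imports "HOL-Analysis.Analysis"
begin

definition cmscale :: "complex \<Rightarrow> complex^'n^'n \<Rightarrow> complex^'n^'n" where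
  "cmscale c A = (\<chi> i j. c * A $ i $ j)"

lemma cmscale_vector_space: "Vector_Spaces.vector_space cmscale"
  by unfold_locales (simp_all add: cmscale_def vec_eq_iff algebra_simps)

interpretation cmat: vector_space "cmscale :: complex \<Rightarrow> complex^'n^'n \<Rightarrow> complex^'n^'n"
  by (rule cmscale_vector_space)

definition diag_vec :: "'a^'n^'n \<Rightarrow> 'a^'n" where
  "diag_vec A = (\<chi> i. A $ i $ i)"

definition symmetric_mat :: "'a^'n^'n \<Rightarrow> bool" where
  "symmetric_mat A \<longleftrightarrow> transpose A = A"

definition complex_orthogonal :: "complex^'n^'n \<Rightarrow> bool" where
  "complex_orthogonal S \<longleftrightarrow> S ** transpose S = mat 1"

end

(*
  Choose S in O(n) maximising the dimension of the diagonal image pi(S L S^t) (the diagonal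
  rank). If pi is not onto on L' = S L S^t, then dim L' = n forces a matrix A /= 0 in L' with
  zero diagonal, say A_ij /= 0. Conjugating a symmetric B by the rotation through pi/4 in the
  (p,q)-plane moves its diagonal by a multiple of e_p - e_q, namely by (B_qq - B_pp)/2 +- B_pq.
  Hence if e_p - e_q is not in pi(L') the diagonal rank does not drop, and it grows as soon as
  some zero-diagonal B in L' has B_pq /= 0. Since some element of L' has nonzero trace, pi(L')
  is not contained in the trace-zero hyperplane, which is spanned by the e_i - e_m; so if
  e_i - e_j lies in pi(L') there is an m with e_i - e_m outside it. A case analysis on A_im
  and A_mj, using at most two rotations, always increases the diagonal rank, contradicting
  maximality.
*)
theory Submission
  imports Defs
begin

lemma (in finite_dimensional_vector_space_pair) linear_inj_on_iff_image_eq_UNIV: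
  assumes f: "Vector_Spaces.linear s1 s2 f" and L: "vs1.subspace L"
    and dim: "vs1.dim L = vs2.dim UNIV"
  shows "inj_on f L \<longleftrightarrow> f ` L = UNIV"
proof -
  interpret f: Vector_Spaces.linear s1 s2 f by (fact f)
  obtain B where B: "B \<subseteq> L" "vs1.independent B" "L \<subseteq> vs1.span B" "card B = vs1.dim L"
    using vs1.basis_exists by blast
  have "finite B" using B(2) by (rule vs1.finiteI_independent)
  have span_B: "vs1.span B = L"
    using B(1,3) L vs1.span_minimal by (metis subset_antisym)
  have image_L: "f ` L = vs2.span (f ` B)"
    by (simp add: span_B[symmetric] f.span_image)
  show ?thesis
  proof
    assume inj: "inj_on f L"
    have "vs2.independent (f ` B)"
      using f.independent_inj_on_image[OF B(2)] inj span_B by (simp add: inj_on_subset B(1))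
    moreover have "card (f ` B) = vs2.dim UNIV"
      using B(1,4) dim inj by (simp add: card_image inj_on_subset)
    ultimately show "f ` L = UNIV"
      using vs2.card_eq_dim[of "f ` B" UNIV] \<open>finite B\<close> image_L by auto
  next
    assume onto: "f ` L = UNIV"
    have "card (f ` B) \<le> vs2.dim UNIV"
      using B(4) dim card_image_le[OF \<open>finite B\<close>, of f] by simp
    then have indep: "vs2.independent (f ` B)"
      using vs2.card_le_dim_spanning[of "f ` B" UNIV] \<open>finite B\<close> image_L onto by auto
    then have "card (f ` B) = card B"
      using vs2.dim_span_eq_card_independent image_L onto B(4) dim by fastforce
    then have "inj_on f B" using \<open>finite B\<close> by (simp add: inj_on_iff_eq_card)
    then show "inj_on f L"
      using f.inj_on_span_independent_image[OF indep] span_B by simp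
  qed
qed

lemma (in finite_dimensional_vector_space) dim_insert_notin_subspace:
  "subspace S \<Longrightarrow> x \<notin> S \<Longrightarrow> dim (insert x S) = dim S + 1"
  by (metis dim_insert span_eq_iff)

abbreviation axis_diff :: "'n \<Rightarrow> 'n \<Rightarrow> complex^'n" where
  "axis_diff p q \<equiv> axis p 1 - axis q 1"

lemma vector_eq_sum_axis_diff:
  "x = (\<Sum>m\<in>UNIV. x $ m) *s axis i 1 - (\<Sum>m\<in>UNIV. x $ m *s axis_diff i m)"
  by (simp add: vec_eq_iff axis_def sum_subtractf sum_distrib_left[symmetric] algebra_simps
      if_distrib[where f = "\<lambda>z. _ * z"] cong: if_cong)

lemma subspace_eq_UNIV_if_axis_diffs:
  assumes D: "vec.subspace D" and "d \<in> D" "(\<Sum>k\<in>UNIV. d $ k) \<noteq> 0"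
    and axis_diffs: "\<And>m. axis_diff i m \<in> D"
  shows "D = UNIV"
proof -
  have sum_in: "(\<Sum>m\<in>UNIV. x $ m *s axis_diff i m) \<in> D" for x
    by (intro vec.subspace_sum[OF D] vec.subspace_scale[OF D] axis_diffs)
  have "(\<Sum>k\<in>UNIV. d $ k) *s axis i 1 = d + (\<Sum>m\<in>UNIV. d $ m *s axis_diff i m)"
    by (subst (2) vector_eq_sum_axis_diff[of d i]) simp
  also have "\<dots> \<in> D"
    using vec.subspace_add[OF D \<open>d \<in> D\<close> sum_in] .
  finally have "inverse (\<Sum>k\<in>UNIV. d $ k) *s ((\<Sum>k\<in>UNIV. d $ k) *s axis i 1) \<in> D"
    by (rule vec.subspace_scale[OF D])
  then have axis: "axis i 1 \<in> D"
    using assms(3) by (metis vector_smult_assoc left_inverse vector_smult_lid)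
  have "x \<in> D" for x
    by (subst vector_eq_sum_axis_diff[of x i])
      (intro vec.subspace_diff[OF D] vec.subspace_scale[OF D] axis sum_in)
  then show ?thesis by auto
qed

section \<open>Square matrices as a finite-dimensional vector space\<close>

lemma cmscale_nth [simp]: "cmscale c A $ i $ j = c * A $ i $ j"
  by (simp add: cmscale_def)

definition mat_unit :: "'n \<Rightarrow> 'n \<Rightarrow> complex^'n^'n" where
  "mat_unit i j = axis i (axis j 1)"

lemma mat_unit_nth: "mat_unit i j $ a $ b = of_bool (i = a \<and> j = b)"
  by (simp add: mat_unit_def axis_def)

lemma mat_unit_eq_iff: "mat_unit i j = mat_unit a b \<longleftrightarrow> i = a \<and> j = b"
  by (auto simp: mat_unit_def axis_eq_axis)

lemma independent_mat_units:
  "cmat.independent (range (case_prod mat_unit) :: (complex^'n^'n) set)"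
proof (rule cmat.independent_if_scalars_zero)
  fix f :: "complex^'n^'n \<Rightarrow> complex" and x :: "complex^'n^'n"
  assume sum0: "(\<Sum>y\<in>range (case_prod mat_unit). cmscale (f y) y) = 0"
    and x_in: "x \<in> range (case_prod mat_unit)"
  then obtain i j where x: "x = mat_unit i j" by auto
  have "0 = (\<Sum>y\<in>range (case_prod mat_unit). cmscale (f y) y) $ i $ j"
    by (simp add: sum0)
  also have "\<dots> = (\<Sum>y\<in>range (case_prod mat_unit). if y = x then f y else 0)"
    unfolding sum_component
    by (intro sum.cong) (auto simp: x mat_unit_nth mat_unit_eq_iff)
  finally show "f x = 0" using x_in by (simp add: x)
qed simp

lemma span_mat_units: "cmat.span (range (case_prod mat_unit) :: (complex^'n^'n) set) = UNIV"
proof -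
  have "A = (\<Sum>i\<in>UNIV. \<Sum>j\<in>UNIV. cmscale (A $ i $ j) (mat_unit i j))" for A :: "complex^'n^'n"
    by (simp add: vec_eq_iff sum_component mat_unit_nth of_bool_conj sum_distrib_left[symmetric]
        sum_distrib_right[symmetric] mult.assoc[symmetric])
  moreover have "(\<Sum>i\<in>UNIV. \<Sum>j\<in>UNIV. cmscale (A $ i $ j) (mat_unit i j))
      \<in> cmat.span (range (case_prod mat_unit))" for A :: "complex^'n^'n"
    by (intro cmat.span_sum cmat.span_scale cmat.span_base) auto
  ultimately show ?thesis by (metis UNIV_eq_I)
qed

interpretation cmat: finite_dimensional_vector_space cmscale "range (case_prod mat_unit)"
  by unfold_locales (simp_all add: independent_mat_units span_mat_units)

interpretation cmat_pair: finite_dimensional_vector_space_pair_1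
  cmscale "range (case_prod mat_unit)" cmscale ..

interpretation cmat_vec: finite_dimensional_vector_space_pair
  cmscale "range (case_prod mat_unit)" "(*s)" cart_basis ..

lemma diag_vec_nth [simp]: "diag_vec A $ i = A $ i $ i"
  by (simp add: diag_vec_def)

interpretation diag_vec: Vector_Spaces.linear cmscale "(*s)" "diag_vec :: complex^'n^'n \<Rightarrow> complex^'n"
  by unfold_locales (simp_all add: vec_eq_iff algebra_simps)

lemma inj_on_diag_vec_iff_image_eq_UNIV:
  assumes "cmat.subspace L" "cmat.dim L = CARD('n)"
  shows "inj_on diag_vec L \<longleftrightarrow> diag_vec ` L = (UNIV :: (complex^'n) set)"
  using cmat_vec.linear_inj_on_iff_image_eq_UNIV[OF diag_vec.linear_axioms assms(1)] assms(2)
  by (simp add: card_cart_basis)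

section \<open>Orthogonal congruence\<close>

lemma complex_orthogonal_transpose_mult: "complex_orthogonal S \<Longrightarrow> transpose S ** S = mat 1"
  by (simp add: complex_orthogonal_def matrix_left_right_inverse)

lemma complex_orthogonal_mat_1: "complex_orthogonal (mat 1)"
  by (simp add: complex_orthogonal_def transpose_mat)

lemma complex_orthogonal_mult:
  "complex_orthogonal S \<Longrightarrow> complex_orthogonal T \<Longrightarrow> complex_orthogonal (S ** T)"
  unfolding complex_orthogonal_def
  by (metis matrix_transpose_mul matrix_mul_assoc matrix_mul_rid)

lemma matrix_inv_complex_orthogonal:
  assumes "complex_orthogonal S"
  shows "matrix_inv S = transpose S"
  unfolding matrix_inv_def
proof (rule some_equality)
  show "S ** transpose S = mat 1 \<and> transpose S ** S = mat 1"
    using assms complex_orthogonal_transpose_mult by (auto simp: complex_orthogonal_def)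
next
  fix T assume inverse: "S ** T = mat 1 \<and> T ** S = mat 1"
  have "T = (transpose S ** S) ** T"
    by (simp add: complex_orthogonal_transpose_mult[OF assms])
  also have "\<dots> = transpose S ** (S ** T)"
    by (simp add: matrix_mul_assoc)
  also have "\<dots> = transpose S"
    using inverse by simp
  finally show "T = transpose S" .
qed

lemma symmetric_mat_nth: "symmetric_mat A \<Longrightarrow> A $ i $ j = A $ j $ i"
  unfolding symmetric_mat_def by (metis transpose_def vec_lambda_beta)

definition mat_congruence :: "'a::comm_semiring_1^'n^'n \<Rightarrow> 'a^'n^'n \<Rightarrow> 'a^'n^'n" where
  "mat_congruence S A = S ** A ** transpose S"

lemma mat_congruence_mult: "mat_congruence S (mat_congruence T A) = mat_congruence (S ** T) A"
  by (simp add: mat_congruence_def matrix_transpose_mul matrix_mul_assoc)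

lemma symmetric_mat_congruence: "symmetric_mat A \<Longrightarrow> symmetric_mat (mat_congruence S A)"
  by (simp add: symmetric_mat_def mat_congruence_def matrix_transpose_mul matrix_mul_assoc)

lemma trace_mat_congruence:
  assumes "complex_orthogonal S"
  shows "trace (mat_congruence S A) = trace A"
proof -
  have "trace (mat_congruence S A) = trace (S ** (A ** transpose S))"
    by (simp add: mat_congruence_def matrix_mul_assoc)
  also have "\<dots> = trace ((A ** transpose S) ** S)"
    by (rule trace_mul_sym)
  also have "\<dots> = trace A"
    by (simp add: matrix_mul_assoc[symmetric] complex_orthogonal_transpose_mult[OF assms])
  finally show ?thesis .
qed

lemma linear_mat_congruence: "Vector_Spaces.linear cmscale cmscale (mat_congruence S)"
  by unfold_locales
    (simp_all add: mat_congruence_def vec_eq_iff matrix_matrix_mult_def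
      sum_distrib_left sum.distrib algebra_simps)

lemma mat_congruence_transpose_cancel:
  "complex_orthogonal S \<Longrightarrow> mat_congruence (transpose S) (mat_congruence S A) = A"
  unfolding mat_congruence_mult
  by (simp add: complex_orthogonal_transpose_mult mat_congruence_def transpose_mat)

lemma inj_mat_congruence: "complex_orthogonal S \<Longrightarrow> inj (mat_congruence S)"
  by (rule inj_on_inverseI[where g = "mat_congruence (transpose S)"])
    (rule mat_congruence_transpose_cancel)

lemma subspace_mat_congruence_image:
  "cmat.subspace L \<Longrightarrow> cmat.subspace (mat_congruence S ` L)"
  by (rule cmat_pair.linear_subspace_image[OF linear_mat_congruence])

lemma dim_mat_congruence_image:
  "complex_orthogonal S \<Longrightarrow> cmat.dim (mat_congruence S ` L) = cmat.dim L"
  by (rule cmat_pair.dim_image_eq[OF linear_mat_congruence])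
    (metis inj_mat_congruence inj_on_subset subset_UNIV)

section \<open>Givens rotations\<close>

definition givens :: "'n \<Rightarrow> 'n \<Rightarrow> 'a \<Rightarrow> 'a \<Rightarrow> 'a::comm_ring_1^'n^'n" where
  "givens p q c s = (\<chi> a b.
     if a = p then (if b = p then c else if b = q then s else 0)
     else if a = q then (if b = p then - s else if b = q then c else 0)
     else of_bool (a = b))"

lemma givens_mult_nth:
  assumes "p \<noteq> q"
  shows "(givens p q c s ** M) $ a $ b =
    (if a = p then c * M$p$b + s * M$q$b
     else if a = q then c * M$q$b - s * M$p$b
     else M$a$b)"
  using assms
  by (simp add: matrix_matrix_mult_def givens_def if_distrib[where f="\<lambda>z. z * _"] sum.If_cases
      Int_Diff Diff_Int_distrib cong: if_cong)

lemma mult_transpose_givens_nth: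
  assumes "p \<noteq> q"
  shows "(M ** transpose (givens p q c s)) $ a $ b =
    (if b = p then c * M$a$p + s * M$a$q
     else if b = q then c * M$a$q - s * M$a$p
     else M$a$b)"
proof -
  have "M ** transpose (givens p q c s) = transpose (givens p q c s ** transpose M)"
    by (simp add: matrix_transpose_mul)
  then show ?thesis
    using assms by (simp add: transpose_def givens_mult_nth)
qed

lemma givens_mult_transpose:
  assumes "p \<noteq> q" "c * c + s * s = 1"
  shows "givens p q c s ** transpose (givens p q c s) = mat 1"
proof (intro iffD2[OF vec_eq_iff] allI)
  fix a b
  show "(givens p q c s ** transpose (givens p q c s)) $ a $ b = mat 1 $ a $ b"
    unfolding mult_transpose_givens_nth[OF assms(1)] using assms
    by (cases "a = p"; cases "a = q"; cases "b = p"; cases "b = q")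
      (simp_all add: givens_def mat_def mult.commute add.commute)
qed

lemma givens_congruence_nth:
  assumes "symmetric_mat A" "p \<noteq> q"
  shows "mat_congruence (givens p q c s) A $ p $ p = c * c * A$p$p + 2 * c * s * A$p$q + s * s * A$q$q"
    and "mat_congruence (givens p q c s) A $ q $ q = s * s * A$p$p - 2 * c * s * A$p$q + c * c * A$q$q"
    and "k \<noteq> p \<Longrightarrow> k \<noteq> q \<Longrightarrow> mat_congruence (givens p q c s) A $ k $ k = A$k$k"
    and "b \<noteq> p \<Longrightarrow> b \<noteq> q \<Longrightarrow>
      mat_congruence (givens p q c s) A $ q $ b = c * A$q$b - s * A$p$b"
proof -
  have "A$q$p = A$p$q"
    using assms(1) by (simp add: symmetric_mat_nth)
  moreover have
    "mat_congruence (givens p q c s) A $ p $ p = c * (c * A$p$p + s * A$q$p) + s * (c * A$p$q + s * A$q$q)"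
    "mat_congruence (givens p q c s) A $ q $ q = c * (c * A$q$q - s * A$p$q) - s * (c * A$q$p - s * A$p$p)"
    using assms(2) by (simp_all add: mat_congruence_def mult_transpose_givens_nth givens_mult_nth)
  ultimately show
    "mat_congruence (givens p q c s) A $ p $ p = c * c * A$p$p + 2 * c * s * A$p$q + s * s * A$q$q"
    "mat_congruence (givens p q c s) A $ q $ q = s * s * A$p$p - 2 * c * s * A$p$q + c * c * A$q$q"
    by (simp_all add: algebra_simps)
qed (use assms(2) in \<open>simp_all add: mat_congruence_def mult_transpose_givens_nth givens_mult_nth\<close>)

definition rot45 :: "complex \<Rightarrow> 'n \<Rightarrow> 'n \<Rightarrow> complex^'n^'n" where
  "rot45 e p q = givens p q (of_real (sqrt (1/2))) (e * of_real (sqrt (1/2)))"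

lemma of_real_sqrt_half_squared: "complex_of_real (sqrt (1/2)) * complex_of_real (sqrt (1/2)) = 1/2"
  by (simp flip: of_real_mult)

lemma complex_orthogonal_rot45:
  assumes "p \<noteq> q" "e * e = 1"
  shows "complex_orthogonal (rot45 e p q)"
proof -
  have "of_real (sqrt (1/2)) * of_real (sqrt (1/2)) + e * of_real (sqrt (1/2)) * (e * of_real (sqrt (1/2)))
      = (1 + e * e) * (1/2 :: complex)"
    by (simp add: algebra_simps of_real_sqrt_half_squared)
  then show ?thesis
    using assms by (simp add: complex_orthogonal_def rot45_def givens_mult_transpose)
qed

lemma rot45_congruence_nth:
  assumes "symmetric_mat A" "p \<noteq> q" "b \<noteq> p" "b \<noteq> q"
  shows "mat_congruence (rot45 e p q) A $ q $ b = of_real (sqrt (1/2)) * (A$q$b - e * A$p$b)"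
  by (simp add: rot45_def givens_congruence_nth(4)[OF assms] algebra_simps)

definition rot45_shift :: "complex \<Rightarrow> 'n \<Rightarrow> 'n \<Rightarrow> complex^'n^'n \<Rightarrow> complex" where
  "rot45_shift e p q A = (A$q$q - A$p$p) / 2 + e * A$p$q"

lemma diag_vec_rot45_congruence:
  assumes "symmetric_mat A" "p \<noteq> q" "e * e = 1"
  shows "diag_vec (mat_congruence (rot45 e p q) A) = diag_vec A + rot45_shift e p q A *s axis_diff p q"
proof -
  define c where "c = complex_of_real (sqrt (1/2))"
  have rot: "rot45 e p q = givens p q c (e * c)"
    by (simp add: rot45_def c_def)
  have squares: "c * c = 1/2" "e * c * (e * c) = 1/2" "2 * c * (e * c) = e"
    using assms(3) of_real_sqrt_half_squared unfolding c_def by (simp_all add: algebra_simps)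
  note entries = givens_congruence_nth[OF assms(1,2), where c = c and s = "e * c", folded rot,
      unfolded squares]
  show ?thesis
  proof (rule iffD2[OF vec_eq_iff], intro allI)
    fix k
    consider "k = p" | "k = q" | "k \<noteq> p" "k \<noteq> q" by blast
    then show "diag_vec (mat_congruence (rot45 e p q) A) $ k
        = (diag_vec A + rot45_shift e p q A *s axis_diff p q) $ k"
      by cases (use assms(2) in \<open>simp_all add: entries rot45_shift_def axis_def field_simps\<close>)
  qed
qed

section \<open>The diagonal rank\<close>

definition diag_rank :: "(complex^'n^'n) set \<Rightarrow> nat" where
  "diag_rank L = vec.dim (diag_vec ` L)"

lemma diag_rank_le_CARD: "diag_rank L \<le> CARD('n)"
  for L :: "(complex^'n^'n) set"
  unfolding diag_rank_def by (metis vec.dim_subset subset_UNIV vec_dim_card)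

lemma diag_image_subset_span_rot45:
  assumes "\<forall>B\<in>L. symmetric_mat B" "p \<noteq> q" "e * e = 1"
  shows "diag_vec ` L \<subseteq>
    vec.span (insert (axis_diff p q) (diag_vec ` mat_congruence (rot45 e p q) ` L))"
proof
  fix x assume "x \<in> diag_vec ` L"
  then obtain B where B: "B \<in> L" "x = diag_vec B" by auto
  have "diag_vec (mat_congruence (rot45 e p q) B) = diag_vec B + rot45_shift e p q B *s axis_diff p q"
    using B(1) assms by (simp add: diag_vec_rot45_congruence)
  then have "x = diag_vec (mat_congruence (rot45 e p q) B) - rot45_shift e p q B *s axis_diff p q"
    by (simp add: B(2))
  also have "\<dots> \<in> vec.span (insert (axis_diff p q) (diag_vec ` mat_congruence (rot45 e p q) ` L))"
    by (intro vec.span_diff vec.span_scale vec.span_base) (use B(1) in auto)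
  finally show "x \<in> vec.span (insert (axis_diff p q) (diag_vec ` mat_congruence (rot45 e p q) ` L))" .
qed

lemma diag_rank_rot45_ge:
  assumes "cmat.subspace L" "\<forall>B\<in>L. symmetric_mat B" "p \<noteq> q" "e * e = 1"
    and "axis_diff p q \<notin> diag_vec ` L"
  shows "diag_rank L \<le> diag_rank (mat_congruence (rot45 e p q) ` L)"
proof -
  let ?u = "axis_diff p q"
  let ?E = "diag_vec ` mat_congruence (rot45 e p q) ` L"
  have "vec.dim (diag_vec ` L) + 1 = vec.dim (insert ?u (diag_vec ` L))"
    using vec.dim_insert_notin_subspace[OF diag_vec.subspace_image[OF assms(1)] assms(5)] by simp
  also have "\<dots> \<le> vec.dim (insert ?u ?E)"
    using diag_image_subset_span_rot45[OF assms(2-4)]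
    by (intro vec.dim_mono) (auto intro: vec.span_base)
  also have "\<dots> \<le> vec.dim ?E + 1"
    by (simp add: vec.dim_insert)
  finally show ?thesis
    by (simp add: diag_rank_def)
qed

lemma diag_rank_rot45_gt:
  assumes "cmat.subspace L" "\<forall>B\<in>L. symmetric_mat B" "p \<noteq> q" "e * e = 1"
    and "axis_diff p q \<notin> diag_vec ` L"
    and "A \<in> L" "diag_vec A = 0" "A $ p $ q \<noteq> 0"
  shows "diag_rank L < diag_rank (mat_congruence (rot45 e p q) ` L)"
proof -
  let ?u = "axis_diff p q"
  let ?E = "diag_vec ` mat_congruence (rot45 e p q) ` L"
  have E: "vec.subspace ?E"
    by (intro diag_vec.subspace_image subspace_mat_congruence_image assms(1))
  have "A $ p $ p = 0" "A $ q $ q = 0"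
    using assms(7) by (auto simp: vec_eq_iff)
  then have "diag_vec (mat_congruence (rot45 e p q) A) = (e * A $ p $ q) *s ?u"
    using diag_vec_rot45_congruence[of A p q e] assms(2-4,6,7) by (simp add: rot45_shift_def)
  then have "(e * A $ p $ q) *s ?u \<in> ?E"
    using assms(6) by (metis image_eqI)
  then have "inverse (e * A $ p $ q) *s ((e * A $ p $ q) *s ?u) \<in> ?E"
    by (rule vec.subspace_scale[OF E])
  moreover have "e * A $ p $ q \<noteq> 0"
    using assms(4,8) by auto
  ultimately have "?u \<in> ?E"
    by (metis vector_smult_assoc left_inverse vector_smult_lid)
  then have "insert ?u (diag_vec ` L) \<subseteq> ?E"
    using diag_image_subset_span_rot45[OF assms(2-4)] vec.span_eq_iff[THEN iffD2, OF E]
    by (simp add: insert_absorb)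
  then have "vec.dim (insert ?u (diag_vec ` L)) \<le> vec.dim ?E"
    by (rule vec.dim_subset)
  then show ?thesis
    using vec.dim_insert_notin_subspace[OF diag_vec.subspace_image[OF assms(1)] assms(5)]
    by (simp add: diag_rank_def)
qed

lemma rot45_axis_diff_witness:
  assumes L: "cmat.subspace L" "\<forall>B\<in>L. symmetric_mat B"
    and "i \<noteq> j" "m \<noteq> i" "m \<noteq> j" "e * e = 1"
    and "axis_diff i j \<in> diag_vec ` L" "axis_diff m j \<notin> diag_vec ` L"
    and "axis_diff m j \<in> diag_vec ` mat_congruence (rot45 e i m) ` L"
  shows "\<exists>B\<in>L. diag_vec B = axis_diff i j \<and> B $ i $ m = - e / 2"
proof -
  let ?D = "diag_vec ` L"
  have D: "vec.subspace ?D"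
    by (rule diag_vec.subspace_image[OF L(1)])
  obtain B where B: "B \<in> L" "diag_vec (mat_congruence (rot45 e i m) B) = axis_diff m j"
    using assms(9) by auto
  define \<mu> where "\<mu> = rot45_shift e i m B"
  have "axis_diff m j = diag_vec B + \<mu> *s axis_diff i m"
    using diag_vec_rot45_congruence[of B i m e] B assms(2,4,6) by (simp add: \<mu>_def)
  then have diag_B: "diag_vec B = axis_diff m j - \<mu> *s axis_diff i m"
    by (simp add: algebra_simps)
  have "\<mu> = -1"
  proof (rule ccontr)
    assume "\<mu> \<noteq> -1"
    then have "1 + \<mu> \<noteq> 0"
      by (auto simp: add_eq_0_iff)
    have "diag_vec B + \<mu> *s axis_diff i j \<in> ?D"
      by (intro vec.subspace_add[OF D] vec.subspace_scale[OF D]) (use B(1) assms(7) in auto)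
    also have "diag_vec B + \<mu> *s axis_diff i j = (1 + \<mu>) *s axis_diff m j"
      unfolding diag_B by (simp add: vec_eq_iff algebra_simps)
    finally have "inverse (1 + \<mu>) *s ((1 + \<mu>) *s axis_diff m j) \<in> ?D"
      by (rule vec.subspace_scale[OF D])
    then have "axis_diff m j \<in> ?D"
      using \<open>1 + \<mu> \<noteq> 0\<close> by (metis vector_smult_assoc left_inverse vector_smult_lid)
    then show False
      using assms(8) by contradiction
  qed
  then have diag_B': "diag_vec B = axis_diff i j"
    using diag_B by (simp add: algebra_simps)
  then have "B $ i $ i = 1" "B $ m $ m = 0"
    using assms(3-5) by (auto simp: vec_eq_iff axis_def dest: spec[of _ i] spec[of _ m])
  then have "e * B $ i $ m = - 1/2"
    using \<open>\<mu> = -1\<close> by (simp add: \<mu>_def rot45_shift_def field_simps)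
  then have "B $ i $ m = - e / 2"
    using assms(6) by (metis mult.assoc mult_1 times_divide_eq_right mult_minus_right)
  then show ?thesis
    using B(1) diag_B' by blast
qed

lemma diag_rank_rot45_twice_gt:
  assumes L: "cmat.subspace L" "\<forall>B\<in>L. symmetric_mat B"
    and "i \<noteq> m" "m \<noteq> j" "j \<noteq> i" "e * e = 1"
    and "axis_diff i m \<notin> diag_vec ` L"
    and "axis_diff m j \<notin> diag_vec ` mat_congruence (rot45 e i m) ` L"
    and A: "A \<in> L" "diag_vec A = 0" "A $ i $ m = 0" "A $ m $ j = 0" "A $ i $ j \<noteq> 0"
  shows "diag_rank L < diag_rank (mat_congruence (rot45 1 m j ** rot45 e i m) ` L)"
proof -
  \<comment> \<open>The first rotation keeps the diagonal of A zero and moves A_ij to position (m,j).\<close>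
  let ?L = "mat_congruence (rot45 e i m) ` L"
  let ?A = "mat_congruence (rot45 e i m) A"
  have L': "cmat.subspace ?L" "\<forall>B\<in>?L. symmetric_mat B"
    using L by (auto simp: subspace_mat_congruence_image symmetric_mat_congruence)
  have "A $ i $ i = 0" "A $ m $ m = 0"
    using A(2) by (auto simp: vec_eq_iff)
  then have "diag_vec ?A = 0"
    using diag_vec_rot45_congruence[of A i m e] A L(2) assms(3,6) by (simp add: rot45_shift_def)
  moreover have "?A $ m $ j \<noteq> 0"
    using rot45_congruence_nth[of A i m j e] A L(2) assms(3-6) by auto
  ultimately have "diag_rank ?L < diag_rank (mat_congruence (rot45 1 m j) ` ?L)"
    using diag_rank_rot45_gt[OF L' assms(4), of 1 ?A] assms(8) A(1) by simp
  moreover have "diag_rank L \<le> diag_rank ?L"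
    by (rule diag_rank_rot45_ge[OF L assms(3,6,7)])
  moreover have "mat_congruence (rot45 1 m j) ` ?L = mat_congruence (rot45 1 m j ** rot45 e i m) ` L"
    by (simp add: image_image mat_congruence_mult)
  ultimately show ?thesis
    by simp
qed

lemma diag_rank_increase_at_pivot:
  assumes L: "cmat.subspace L" "\<forall>B\<in>L. symmetric_mat B"
    and "i \<noteq> m" "m \<noteq> j" "j \<noteq> i"
    and "axis_diff i j \<in> diag_vec ` L"
    and "axis_diff i m \<notin> diag_vec ` L" "axis_diff m j \<notin> diag_vec ` L"
    and A: "A \<in> L" "diag_vec A = 0" "A $ i $ m = 0" "A $ m $ j = 0" "A $ i $ j \<noteq> 0"
  shows "\<exists>S. complex_orthogonal S \<and> diag_rank L < diag_rank (mat_congruence S ` L)"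
proof (cases "\<forall>e\<in>{1, -1}. axis_diff m j \<in> diag_vec ` mat_congruence (rot45 e i m) ` L")
  case True
  \<comment> \<open>The witnesses for e = 1 and e = -1 differ by a zero-diagonal matrix with
    nonzero (i,m)-entry.\<close>
  obtain B1 where B1: "B1 \<in> L" "diag_vec B1 = axis_diff i j" "B1 $ i $ m = - 1/2"
    using rot45_axis_diff_witness[OF L, of i j m 1] True assms(3-8) by auto
  obtain B2 where B2: "B2 \<in> L" "diag_vec B2 = axis_diff i j" "B2 $ i $ m = 1/2"
    using rot45_axis_diff_witness[OF L, of i j m "-1"] True assms(3-8) by auto
  have "B1 - B2 \<in> L"
    using cmat.subspace_diff[OF L(1) B1(1) B2(1)] .
  moreover have "diag_vec (B1 - B2) = 0"
    using B1(2) B2(2) by (simp add: diag_vec.diff)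
  moreover have "(B1 - B2) $ i $ m \<noteq> 0"
    by (simp add: B1(3) B2(3))
  ultimately have "diag_rank L < diag_rank (mat_congruence (rot45 1 i m) ` L)"
    using diag_rank_rot45_gt[OF L assms(3), of 1] assms(7) by simp
  then show ?thesis
    using complex_orthogonal_rot45[OF assms(3), of 1] by auto
next
  case False
  then obtain e where e: "e * e = 1" "axis_diff m j \<notin> diag_vec ` mat_congruence (rot45 e i m) ` L"
    by (auto intro: that[of 1] that[of "-1"])
  have "complex_orthogonal (rot45 1 m j ** rot45 e i m)"
    using assms(3,4) e(1) by (intro complex_orthogonal_mult complex_orthogonal_rot45) auto
  then show ?thesis
    using diag_rank_rot45_twice_gt[OF L assms(3-5) e(1) assms(7) e(2) A] by blast
qed

lemma diag_rank_increase:
  assumes L: "cmat.subspace L" "\<forall>B\<in>L. symmetric_mat B"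
    and "A0 \<in> L" "trace A0 \<noteq> 0"
    and A: "A \<in> L" "A \<noteq> 0" "diag_vec A = 0"
    and "diag_vec ` L \<noteq> UNIV"
  shows "\<exists>S. complex_orthogonal S \<and> diag_rank L < diag_rank (mat_congruence S ` L)"
proof -
  let ?D = "diag_vec ` L"
  have D: "vec.subspace ?D"
    by (rule diag_vec.subspace_image[OF L(1)])
  have grow: "\<exists>S. complex_orthogonal S \<and> diag_rank L < diag_rank (mat_congruence S ` L)"
    if "p \<noteq> q" "axis_diff p q \<notin> ?D" "A $ p $ q \<noteq> 0" for p q
    using diag_rank_rot45_gt[OF L that(1), of 1, OF _ that(2) A(1,3) that(3)]
      complex_orthogonal_rot45[OF that(1), of 1] by auto
  obtain i j where ij: "A $ i $ j \<noteq> 0"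
    using A(2) by (auto simp: vec_eq_iff)
  have "i \<noteq> j"
    using ij A(3) by (auto simp: vec_eq_iff)
  show ?thesis
  proof (cases "axis_diff i j \<in> ?D")
    case False
    then show ?thesis using grow \<open>i \<noteq> j\<close> ij by blast
  next
    case True
    obtain m where m: "axis_diff i m \<notin> ?D"
      using subspace_eq_UNIV_if_axis_diffs[OF D, of "diag_vec A0" i] assms(3,4,8)
      by (auto simp: trace_def)
    have "m \<noteq> i" "m \<noteq> j"
      using m True vec.subspace_0[OF D] by auto
    have "axis_diff m j \<notin> ?D"
    proof
      assume "axis_diff m j \<in> ?D"
      then have "axis_diff i j - axis_diff m j \<in> ?D"
        by (rule vec.subspace_diff[OF D True])
      then show False
        using m by simp
    qed
    consider "A $ i $ m \<noteq> 0" | "A $ m $ j \<noteq> 0" | "A $ i $ m = 0" "A $ m $ j = 0"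
      by blast
    then show ?thesis
    proof cases
      case 1
      then show ?thesis
        using grow[of i m] m \<open>m \<noteq> i\<close> by auto
    next
      case 2
      then show ?thesis
        using grow[of m j] \<open>axis_diff m j \<notin> ?D\<close> \<open>m \<noteq> j\<close> by auto
    next
      case 3
      then show ?thesis
        using diag_rank_increase_at_pivot[OF L _ _ _ True m \<open>axis_diff m j \<notin> ?D\<close>
            A(1,3) _ _ ij] \<open>m \<noteq> i\<close> \<open>m \<noteq> j\<close> \<open>i \<noteq> j\<close> by auto
    qed
  qed
qed

lemma diag_image_eq_UNIV_if_diag_rank_maximal:
  assumes L: "cmat.subspace L" "cmat.dim L = CARD('n)" "\<forall>B\<in>L. symmetric_mat B"
    and "\<exists>A\<in>L. trace A \<noteq> 0"
    and maximal: "\<And>S. complex_orthogonal S \<Longrightarrow> diag_rank (mat_congruence S ` L) \<le> diag_rank L"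
  shows "diag_vec ` L = (UNIV :: (complex^'n) set)"
proof (rule ccontr)
  assume "diag_vec ` L \<noteq> UNIV"
  then obtain A where "A \<in> L" "A \<noteq> 0" "diag_vec A = 0"
    using inj_on_diag_vec_iff_image_eq_UNIV[OF L(1,2)] diag_vec.inj_on_iff_eq_0[OF L(1)] by blast
  then obtain S where "complex_orthogonal S" "diag_rank L < diag_rank (mat_congruence S ` L)"
    using diag_rank_increase[OF L(1,3)] assms(4) \<open>diag_vec ` L \<noteq> UNIV\<close> by blast
  then show False
    using maximal by (meson not_le)
qed

theorem lemma3:
  fixes \<L> :: "(complex^'n^'n) set"
  assumes "cmat.subspace \<L>"
    and "cmat.dim \<L> = CARD('n)"
    and "\<forall>A\<in>\<L>. symmetric_mat A"
    and "\<exists>A\<in>\<L>. trace A \<noteq> 0"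
  shows "\<exists>S. complex_orthogonal S \<and>
           bij_betw diag_vec ((\<lambda>A. S ** A ** matrix_inv S) ` \<L>) (UNIV :: (complex^'n) set)"
proof -
  obtain S0 where S0: "complex_orthogonal S0"
    and maximal: "\<And>S. complex_orthogonal S \<Longrightarrow>
      diag_rank (mat_congruence S ` \<L>) \<le> diag_rank (mat_congruence S0 ` \<L>)"
    using ex_has_greatest_nat[of complex_orthogonal "mat 1"
        "\<lambda>S. diag_rank (mat_congruence S ` \<L>)" "CARD('n) + 1"]
      complex_orthogonal_mat_1 diag_rank_le_CARD
    by (metis less_Suc_eq_le Suc_eq_plus1)
  let ?L = "mat_congruence S0 ` \<L>"
  have L: "cmat.subspace ?L" "cmat.dim ?L = CARD('n)" "\<forall>B\<in>?L. symmetric_mat B"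
    using assms(1-3) by (auto simp: subspace_mat_congruence_image dim_mat_congruence_image[OF S0]
        symmetric_mat_congruence)
  have "\<exists>A\<in>?L. trace A \<noteq> 0"
    using assms(4) trace_mat_congruence[OF S0] by auto
  moreover have "diag_rank (mat_congruence S ` ?L) \<le> diag_rank ?L" if "complex_orthogonal S" for S
    using maximal[OF complex_orthogonal_mult[OF that S0]] by (simp add: image_image mat_congruence_mult)
  ultimately have onto: "diag_vec ` ?L = UNIV"
    using diag_image_eq_UNIV_if_diag_rank_maximal[OF L] by blast
  then have "inj_on diag_vec ?L"
    using inj_on_diag_vec_iff_image_eq_UNIV[OF L(1,2)] by simp
  moreover have "(\<lambda>A. S0 ** A ** matrix_inv S0) ` \<L> = ?L"
    by (simp add: matrix_inv_complex_orthogonal[OF S0] mat_congruence_def)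
  ultimately show ?thesis
    using S0 onto by (auto simp: bij_betw_def)
qed

end
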